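(* Let $Q=\{\rho=0\}$ with $\rho(x_1,x_2,x_3)=x_1^2+x_2^2+x_3^2-2(x_1x_2+x_2x_3+x_3x_1)$, and $\mathcal U=\{[x]\in\mathbb{RP}^2:\rho(x)<0\}$. Then: (1) $f(a_j)=Q$ for each $a_j\in\mathcal I(f)$; (2) $f(p)=p$ for every $p\in Q\setminus\mathcal I(f)$; (3) for every $p\in\mathbb{P}^2\setminus(A_1\cup A_2\cup A_3)$, $p\in\mathcal U$ if and only if $f(p)\in\mathcal U$.
   Context: $g[x_1:x_2:x_3]=[x_1^2:x_2^2:x_3^2]$, $h[x_1:x_2:x_3]=[x_1(-x_1+x_2+x_3):x_2(x_1-x_2+x_3):x_3(x_1+x_2-x_3)]$, $f=g\circ h$. $\mathcal I(f)=\{a_1,a_2,a_3\}$ with $a_1=[0:1:1]$, $a_2=[1:0:1]$, $a_3=[1:1:0]$, and $A_i$ is the line through $\{a_1,a_2,a_3\}\setminus\{a_i\}$. For $p\in\mathcal I(f)$, $f(p)$ denotes the set of all limits $\lim f(p_j)$ with $p_j\to p$, $p_j\notin\mathcal I(f)$. ($\rho(x)<0$ is well defined on $\mathbb{RP}^2$ since $\rho$ is homogeneous of even degree; $\mathcal U$ is the open disk in $\mathbb{RP}^2$ bounded by $Q\cap\mathbb{RP}^2$, which is tangent to the lines $x_j=0$ at the points of $\mathcal I(f)$.) *)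

theory Defs
  imports "HOL-Analysis.Analysis"
begin

type_synonym cvec = "complex \<times> complex \<times> complex"

definition sc :: "complex \<Rightarrow> cvec \<Rightarrow> cvec" where
  "sc c v = (case v of (x1, x2, x3) \<Rightarrow> (c * x1, c * x2, c * x3))"

definition pt :: "cvec \<Rightarrow> cvec set" where
  "pt x = {y. y \<noteq> 0 \<and> (\<exists>c. c \<noteq> 0 \<and> y = sc c x)}"

definition P2 :: "cvec set set" where
  "P2 = pt ` (UNIV - {0})"

definition gmap :: "cvec \<Rightarrow> cvec" where
  "gmap v = (case v of (x1, x2, x3) \<Rightarrow> (x1^2, x2^2, x3^2))"

definition hmap :: "cvec \<Rightarrow> cvec" where
  "hmap v = (case v of (x1, x2, x3) \<Rightarrow>
     (x1 * (- x1 + x2 + x3), x2 * (x1 - x2 + x3), x3 * (x1 + x2 - x3)))"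

definition Fmap :: "cvec \<Rightarrow> cvec" where
  "Fmap v = gmap (hmap v)"

definition Ind :: "cvec set set" where
  "Ind = {p \<in> P2. \<forall>x\<in>p. Fmap x = 0}"

text \<open>Action of f on a projective point (meaningful off Ind).\<close>
definition fpt :: "cvec set \<Rightarrow> cvec set" where
  "fpt p = pt (Fmap (SOME x. x \<in> p))"

text \<open>Convergence in the (quotient topology of the) projective plane:
  there are representatives converging in C^3 to a representative of the limit.\<close>
definition convP :: "(nat \<Rightarrow> cvec set) \<Rightarrow> cvec set \<Rightarrow> bool" where
  "convP P q \<longleftrightarrow> (\<exists>X x. (\<forall>j. X j \<in> P j) \<and> x \<in> q \<and> X \<longlonglongrightarrow> x)"

definition flim :: "cvec set \<Rightarrow> cvec set set" where
  "flim p = {q \<in> P2. \<exists>P. (\<forall>j. P j \<in> P2 - Ind) \<and> convP P p \<and> convP (\<lambda>j. fpt (P j)) q}"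

definition rho :: "cvec \<Rightarrow> complex" where
  "rho v = (case v of (x1, x2, x3) \<Rightarrow>
     x1^2 + x2^2 + x3^2 - 2 * (x1 * x2 + x2 * x3 + x3 * x1))"

definition Qc :: "cvec set set" where
  "Qc = {p \<in> P2. \<forall>x\<in>p. rho x = 0}"

definition is_real :: "cvec \<Rightarrow> bool" where
  "is_real v = (case v of (x1, x2, x3) \<Rightarrow> Im x1 = 0 \<and> Im x2 = 0 \<and> Im x3 = 0)"

text \<open>U: real points with rho < 0 (well defined since rho is even-degree homogeneous).\<close>
definition U :: "cvec set set" where
  "U = {p \<in> P2. \<exists>x\<in>p. is_real x \<and> Re (rho x) < 0}"

definition a1 :: cvec where "a1 = (0, 1, 1)"
definition a2 :: cvec where "a2 = (1, 0, 1)"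
definition a3 :: cvec where "a3 = (1, 1, 0)"

definition pline :: "cvec \<Rightarrow> cvec \<Rightarrow> cvec set set" where
  "pline a b = {p \<in> P2. \<exists>x\<in>p. \<exists>s t. x = sc s a + sc t b}"

definition A1 :: "cvec set set" where "A1 = pline a2 a3"
definition A2 :: "cvec set set" where "A2 = pline a1 a3"
definition A3 :: "cvec set set" where "A3 = pline a1 a2"

end

(*
  On the conic Q one has F x = 4 x1 x2 x3 x, which gives (2).  With L the product of the three
  linear forms defining A1, A2, A3, the identity rho (F x) = rho x * L x ^ 2 shows that for a real
  representative x off the lines, x and F x lie in U together.  If conversely F x is proportional
  to a real point of U, the coordinates of that point share a sign, so a multiple u of h x is real;
  since h is a Cremona involution, h (h x) = L x * x, the real point h u represents [x].

  For (1), the polynomial identity relating rho (F u), rho u and F u passes to the limit and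
  forces every limit of F at a_j onto Q.  Conversely, writing a point of Q as
  (al^2, be^2, ga^2) with al = be + ga, the curve t |-> (t al, 1 - t be, 1 - t ga) through a1 has
  images tending to it; the cyclic symmetry of F carries a1 to a2 and a3.
*)

theory Submission
  imports Defs
begin

lemma sc_simp [simp]: "sc c (x1, x2, x3) = (c * x1, c * x2, c * x3)"
  by (simp add: sc_def)

lemma cvec_eq_0_iff [simp]: "((x1, x2, x3) = (0 :: cvec)) \<longleftrightarrow> x1 = 0 \<and> x2 = 0 \<and> x3 = 0"
  by (simp add: zero_prod_def)

lemma Fmap_simp [simp]:
  "Fmap (x1, x2, x3) = ((x1 * (-x1 + x2 + x3))^2, (x2 * (x1 - x2 + x3))^2, (x3 * (x1 + x2 - x3))^2)"
  by (simp add: Fmap_def gmap_def hmap_def)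

lemma hmap_simp [simp]:
  "hmap (x1, x2, x3) = (x1 * (-x1 + x2 + x3), x2 * (x1 - x2 + x3), x3 * (x1 + x2 - x3))"
  by (simp add: hmap_def)

lemma rho_simp [simp]: "rho (x1, x2, x3) = x1^2 + x2^2 + x3^2 - 2 * (x1 * x2 + x2 * x3 + x3 * x1)"
  by (simp add: rho_def)

lemma is_real_simp [simp]: "is_real (x1, x2, x3) \<longleftrightarrow> x1 \<in> \<real> \<and> x2 \<in> \<real> \<and> x3 \<in> \<real>"
  by (simp add: is_real_def complex_is_Real_iff)

text \<open>The product of the linear forms cutting out the lines \<open>A1\<close>, \<open>A2\<close>, \<open>A3\<close>.\<close>

definition lines_cubic :: "cvec \<Rightarrow> complex" where
  "lines_cubic v = (case v of (x1, x2, x3) \<Rightarrow> (-x1 + x2 + x3) * (x1 - x2 + x3) * (x1 + x2 - x3))"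

lemma lines_cubic_simp [simp]:
  "lines_cubic (x1, x2, x3) = (-x1 + x2 + x3) * (x1 - x2 + x3) * (x1 + x2 - x3)"
  by (simp add: lines_cubic_def)

lemma sc_sc: "sc a (sc b x) = sc (a * b) x"
  by (cases x) (simp add: mult.assoc)

lemma sc_1 [simp]: "sc 1 x = x"
  by (cases x) simp

lemma sc_eq_0_iff: "sc c x = 0 \<longleftrightarrow> c = 0 \<or> x = 0"
  by (cases x) auto

lemma Fmap_0 [simp]: "Fmap 0 = 0"
  by (simp add: zero_prod_def)

lemma Fmap_sc: "Fmap (sc c x) = sc (c^4) (Fmap x)"
  by (cases x) (simp add: algebra_simps power2_eq_square power4_eq_xxxx)

lemma rho_sc: "rho (sc c x) = c^2 * rho x"
  by (cases x) (simp add: algebra_simps power2_eq_square)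

lemma hmap_sc: "hmap (sc c x) = sc (c^2) (hmap x)"
  by (cases x) (simp add: algebra_simps power2_eq_square)

lemma lines_cubic_sc: "lines_cubic (sc c x) = c^3 * lines_cubic x"
  by (cases x) (simp add: algebra_simps power3_eq_cube)

lemma rho_Fmap: "rho (Fmap x) = rho x * lines_cubic x ^ 2"
  by (cases x) (simp add: algebra_simps power2_eq_square)

lemma hmap_hmap: "hmap (hmap x) = sc (lines_cubic x) x"
  by (cases x) (simp add: algebra_simps power2_eq_square)

lemma Fmap_eq_0_iff: "Fmap x = 0 \<longleftrightarrow> hmap x = 0"
  by (cases x) simp

lemma Fmap_nonzero: "x \<noteq> 0 \<Longrightarrow> lines_cubic x \<noteq> 0 \<Longrightarrow> Fmap x \<noteq> 0"
  by (cases x) auto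

lemma mem_pt_iff: "y \<in> pt x \<longleftrightarrow> y \<noteq> 0 \<and> (\<exists>c. c \<noteq> 0 \<and> y = sc c x)"
  by (simp add: pt_def)

lemma pt_self: "x \<noteq> 0 \<Longrightarrow> x \<in> pt x"
  by (auto simp: mem_pt_iff intro: exI[of _ 1] simp: sc_def split: prod.splits)

lemma pt_sc: assumes "c \<noteq> 0" shows "pt (sc c x) = pt x"
proof (rule set_eqI)
  fix y
  have "(\<exists>d. d \<noteq> 0 \<and> y = sc d (sc c x)) \<longleftrightarrow> (\<exists>d. d \<noteq> 0 \<and> y = sc d x)"
  proof
    assume "\<exists>d. d \<noteq> 0 \<and> y = sc d (sc c x)"
    then show "\<exists>d. d \<noteq> 0 \<and> y = sc d x" using assms by (metis mult_eq_0_iff sc_sc)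
  next
    assume "\<exists>d. d \<noteq> 0 \<and> y = sc d x"
    then obtain d where "d \<noteq> 0" "y = sc d x" by blast
    then have "d / c \<noteq> 0 \<and> y = sc (d / c) (sc c x)" using assms by (simp add: sc_sc)
    then show "\<exists>d. d \<noteq> 0 \<and> y = sc d (sc c x)" by blast
  qed
  then show "y \<in> pt (sc c x) \<longleftrightarrow> y \<in> pt x" by (simp add: mem_pt_iff)
qed

lemma pt_eqI: "y \<in> pt x \<Longrightarrow> pt y = pt x"
  by (auto simp: mem_pt_iff pt_sc)

lemma pt_in_P2: "x \<noteq> 0 \<Longrightarrow> pt x \<in> P2"
  by (simp add: P2_def)

lemma P2_E:
  assumes "p \<in> P2" obtains x where "x \<noteq> 0" "p = pt x"
  using assms by (auto simp: P2_def)

lemma P2_eq_pt: "p \<in> P2 \<Longrightarrow> x \<in> p \<Longrightarrow> p = pt x"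
  by (metis P2_E pt_eqI)

lemma P2_mem_nonzero: "p \<in> P2 \<Longrightarrow> x \<in> p \<Longrightarrow> x \<noteq> 0"
  by (auto elim: P2_E simp: mem_pt_iff)

lemma fpt_pt: assumes "x \<noteq> 0" shows "fpt (pt x) = pt (Fmap x)"
proof -
  have "(SOME z. z \<in> pt x) \<in> pt x" using pt_self[OF assms] by (rule someI)
  then obtain k where "k \<noteq> 0" "(SOME z. z \<in> pt x) = sc k x" by (auto simp: mem_pt_iff)
  then show ?thesis by (simp add: fpt_def Fmap_sc pt_sc)
qed

lemma ball_pt_iff:
  assumes "x \<noteq> 0" "\<And>c. c \<noteq> 0 \<Longrightarrow> P (sc c x) \<longleftrightarrow> P x"
  shows "(\<forall>y\<in>pt x. P y) \<longleftrightarrow> P x"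
proof
  assume "\<forall>y\<in>pt x. P y"
  then show "P x" using pt_self[OF assms(1)] by blast
next
  assume "P x"
  then show "\<forall>y\<in>pt x. P y" using assms(2) by (auto simp: mem_pt_iff)
qed

lemma pt_in_Ind_iff: "x \<noteq> 0 \<Longrightarrow> pt x \<in> Ind \<longleftrightarrow> Fmap x = 0"
  using ball_pt_iff[of x "\<lambda>y. Fmap y = 0"] pt_in_P2[of x]
  by (simp add: Ind_def Fmap_sc sc_eq_0_iff del: Fmap_simp)

lemma pt_in_Qc_iff: "x \<noteq> 0 \<Longrightarrow> pt x \<in> Qc \<longleftrightarrow> rho x = 0"
  using ball_pt_iff[of x "\<lambda>y. rho y = 0"] pt_in_P2[of x]
  by (simp add: Qc_def rho_sc del: rho_simp)

lemma hmap_eq_0_cases: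
  assumes "hmap x = 0" "x \<noteq> 0"
  shows "\<exists>c. c \<noteq> 0 \<and> (x = sc c a1 \<or> x = sc c a2 \<or> x = sc c a3)"
proof -
  obtain x1 x2 x3 where x: "x = (x1, x2, x3)" by (cases x)
  have "x1 * (-x1 + x2 + x3) = 0" "x2 * (x1 - x2 + x3) = 0" "x3 * (x1 + x2 - x3) = 0"
    using assms(1) unfolding x by simp_all
  then have "x1 = 0 \<or> x1 = x2 + x3" "x2 = 0 \<or> x2 = x1 + x3" "x3 = 0 \<or> x3 = x1 + x2"
    unfolding mult_eq_0_iff by (auto simp: algebra_simps)
  then have "(x1 = 0 \<and> x3 = x2) \<or> (x2 = 0 \<and> x3 = x1) \<or> (x3 = 0 \<and> x2 = x1)"
    using assms(2) unfolding x by auto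
  then show ?thesis using assms(2) unfolding x a1_def a2_def a3_def by auto
qed

lemma Ind_subset: "Ind \<subseteq> {pt a1, pt a2, pt a3}"
proof
  fix p assume p: "p \<in> Ind"
  then obtain x where x: "x \<noteq> 0" "p = pt x" by (auto simp: Ind_def elim: P2_E)
  with p have "hmap x = 0" by (simp add: pt_in_Ind_iff Fmap_eq_0_iff del: Fmap_simp)
  then obtain c where "c \<noteq> 0" "x = sc c a1 \<or> x = sc c a2 \<or> x = sc c a3"
    using hmap_eq_0_cases x(1) by blast
  then show "p \<in> {pt a1, pt a2, pt a3}" using x(2) by (auto simp: pt_sc)
qed

lemma Fmap_on_conic:
  assumes "rho (x1, x2, x3) = 0"
  shows "Fmap (x1, x2, x3) = sc (4 * x1 * x2 * x3) (x1, x2, x3)"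
proof -
  have "(x1 * (-x1 + x2 + x3))^2 = x1^2 * rho (x1, x2, x3) + 4 * x1 * x2 * x3 * x1"
       "(x2 * (x1 - x2 + x3))^2 = x2^2 * rho (x1, x2, x3) + 4 * x1 * x2 * x3 * x2"
       "(x3 * (x1 + x2 - x3))^2 = x3^2 * rho (x1, x2, x3) + 4 * x1 * x2 * x3 * x3"
    by (simp_all add: algebra_simps power2_eq_square)
  then show ?thesis using assms by simp
qed

lemma fpt_fixes_conic:
  assumes "x \<noteq> 0" "rho x = 0" "Fmap x \<noteq> 0"
  shows "fpt (pt x) = pt x"
proof -
  obtain x1 x2 x3 where x: "x = (x1, x2, x3)" by (cases x)
  have "Fmap x = sc (4 * x1 * x2 * x3) x"
    using Fmap_on_conic assms(2) unfolding x by blast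
  moreover from this have "4 * x1 * x2 * x3 \<noteq> 0" using assms(3) by (auto simp: sc_eq_0_iff)
  ultimately show ?thesis using assms(1) by (simp add: fpt_pt pt_sc)
qed

subsection \<open>Limits at the indeterminacy points\<close>

lemma flim_subset_Qc:
  assumes "rho (x1, x2, x3) = 0" "x1^2 * x2^2 + x2^2 * x3^2 + x3^2 * x1^2 \<noteq> 0"
  shows "flim (pt (x1, x2, x3)) \<subseteq> Qc"
proof
  define e :: "cvec \<Rightarrow> complex" where
    "e u = fst u^2 * fst (snd u)^2 + fst (snd u)^2 * snd (snd u)^2 + snd (snd u)^2 * fst u^2" for u
  define D :: "cvec \<Rightarrow> cvec \<Rightarrow> complex" where
    "D u v = rho v * e u - rho u *
       ((-fst u + fst (snd u) + snd (snd u))^2 * fst (snd v) * snd (snd v)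
        + (fst u - fst (snd u) + snd (snd u))^2 * fst v * snd (snd v)
        + (fst u + fst (snd u) - snd (snd u))^2 * fst v * fst (snd v))" for u v
  \<comment> \<open>\<open>D u v\<close> vanishes whenever \<open>v\<close> is proportional to \<open>F u\<close>; in the limit \<open>rho x = 0\<close>
    but \<open>e x \<noteq> 0\<close>, which forces \<open>rho y = 0\<close>.\<close>
  have D_Fmap: "D u (sc c (Fmap u)) = 0" for u c
  proof (cases u)
    case (fields x1 x2 x3)
    define l1 l2 l3 where "l1 = -x1 + x2 + x3" and "l2 = x1 - x2 + x3" and "l3 = x1 + x2 - x3"
    have rho_v: "rho (sc c (Fmap u)) = rho u * (c * l1 * l2 * l3)^2"
      unfolding rho_sc rho_Fmap
      by (simp add: fields l1_def l2_def l3_def power_mult_distrib del: rho_simp)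
    have v: "sc c (Fmap u) = (c * (x1 * l1)^2, c * (x2 * l2)^2, c * (x3 * l3)^2)"
      by (simp add: fields l1_def l2_def l3_def)
    have u: "fst u = x1" "fst (snd u) = x2" "snd (snd u) = x3" by (simp_all add: fields)
    show ?thesis
      unfolding D_def e_def rho_v unfolding v fst_conv snd_conv u
      unfolding l1_def [symmetric] l2_def [symmetric] l3_def [symmetric]
      by (simp add: algebra_simps power2_eq_square del: rho_simp)
  qed
  fix q assume "q \<in> flim (pt (x1, x2, x3))"
  then obtain P X x Y y where q: "q \<in> P2" and P: "\<forall>j. P j \<in> P2"
    and X: "\<forall>j. X j \<in> P j" "x \<in> pt (x1, x2, x3)" "X \<longlonglongrightarrow> x"
    and Y: "\<forall>j. Y j \<in> fpt (P j)" "y \<in> q" "Y \<longlonglongrightarrow> y"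
    unfolding flim_def convP_def by blast
  have "(\<lambda>j. D (X j) (Y j)) = (\<lambda>_. 0)"
  proof
    fix j
    have "X j \<noteq> 0" "P j = pt (X j)" using P X(1) P2_eq_pt P2_mem_nonzero by blast+
    then have "Y j \<in> pt (Fmap (X j))" using Y(1) fpt_pt by metis
    then obtain c where "Y j = sc c (Fmap (X j))" by (auto simp: mem_pt_iff)
    then show "D (X j) (Y j) = 0" using D_Fmap by simp
  qed
  moreover have "(\<lambda>j. D (X j) (Y j)) \<longlonglongrightarrow> D x y"
    unfolding D_def e_def rho_def split_beta by (intro tendsto_intros X(3) Y(3))
  ultimately have "D x y = 0" by (simp add: LIMSEQ_const_iff)
  moreover obtain k where k: "k \<noteq> 0" "x = sc k (x1, x2, x3)" using X(2) by (auto simp: mem_pt_iff)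
  moreover have "rho x = 0" unfolding k(2) rho_sc assms(1) by simp
  ultimately have "rho y * e x = 0" by (simp add: D_def)
  moreover have "e x = k^4 * (x1^2 * x2^2 + x2^2 * x3^2 + x3^2 * x1^2)"
    unfolding k(2) e_def by (simp add: power_mult_distrib algebra_simps)
  ultimately have "rho y * (k^4 * (x1^2 * x2^2 + x2^2 * x3^2 + x3^2 * x1^2)) = 0" by simp
  then have "rho y = 0" using assms(2) k(1) by simp
  moreover have "y \<noteq> 0" "q = pt y" using Y(2) q P2_eq_pt P2_mem_nonzero by blast+
  ultimately show "q \<in> Qc" using pt_in_Qc_iff by simp
qed

definition Fmap_limit :: "cvec \<Rightarrow> cvec \<Rightarrow> bool" where
  "Fmap_limit x y \<longleftrightarrow> (\<exists>X c. (\<forall>j. sc (c j) (Fmap (X j)) \<noteq> 0) \<and> X \<longlonglongrightarrow> x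
     \<and> (\<lambda>j. sc (c j) (Fmap (X j))) \<longlonglongrightarrow> y)"

lemma flim_if_Fmap_limit:
  assumes "x \<noteq> 0" "y \<noteq> 0" "Fmap_limit x y"
  shows "pt y \<in> flim (pt x)"
proof -
  obtain X c where nz: "\<forall>j. sc (c j) (Fmap (X j)) \<noteq> 0"
    and X: "X \<longlonglongrightarrow> x" and Y: "(\<lambda>j. sc (c j) (Fmap (X j))) \<longlonglongrightarrow> y"
    using assms(3) unfolding Fmap_limit_def by blast
  have Fmap_X: "c j \<noteq> 0" "Fmap (X j) \<noteq> 0" "X j \<noteq> 0" for j
    using nz Fmap_0 by (metis sc_eq_0_iff)+
  then have "pt (X j) \<in> P2 - Ind" for j by (simp add: pt_in_P2 pt_in_Ind_iff)
  moreover have "convP (\<lambda>j. pt (X j)) (pt x)"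
    unfolding convP_def using Fmap_X(3) pt_self assms(1) X by blast
  moreover have "sc (c j) (Fmap (X j)) \<in> fpt (pt (X j))" for j
    using Fmap_X nz[rule_format, of j] by (auto simp: fpt_pt mem_pt_iff simp del: Fmap_simp)
  then have "convP (\<lambda>j. fpt (pt (X j))) (pt y)"
    unfolding convP_def using pt_self[OF assms(2)] Y by (intro exI[of _ "\<lambda>j. sc (c j) (Fmap (X j))"]) blast
  ultimately show ?thesis
    unfolding flim_def using pt_in_P2[OF assms(2)] by (intro CollectI conjI exI[of _ "\<lambda>j. pt (X j)"]) auto
qed

definition rot :: "cvec \<Rightarrow> cvec" where
  "rot v = (snd (snd v), fst v, fst (snd v))"

lemma rot_simp [simp]: "rot (x1, x2, x3) = (x3, x1, x2)"
  by (simp add: rot_def)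

lemma Fmap_rot: "Fmap (rot v) = rot (Fmap v)"
  by (cases v) (simp add: algebra_simps)

lemma sc_rot: "sc c (rot v) = rot (sc c v)"
  by (cases v) simp

lemma rot_eq_0_iff: "rot v = 0 \<longleftrightarrow> v = 0"
  by (cases v) auto

lemma rho_rot: "rho (rot v) = rho v"
  by (cases v) (simp add: algebra_simps)

lemma rot_rot_rot: "rot (rot (rot v)) = v"
  by (cases v) simp

lemma tendsto_rot: "Z \<longlonglongrightarrow> z \<Longrightarrow> (\<lambda>j. rot (Z j)) \<longlonglongrightarrow> rot z"
  unfolding rot_def by (intro tendsto_intros)

lemma Fmap_limit_rot:
  assumes "Fmap_limit x y" shows "Fmap_limit (rot x) (rot y)"
proof -
  obtain X c where "\<forall>j. sc (c j) (Fmap (X j)) \<noteq> 0" "X \<longlonglongrightarrow> x"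
    "(\<lambda>j. sc (c j) (Fmap (X j))) \<longlonglongrightarrow> y"
    using assms unfolding Fmap_limit_def by blast
  then have "(\<forall>j. sc (c j) (Fmap (rot (X j))) \<noteq> 0) \<and> (\<lambda>j. rot (X j)) \<longlonglongrightarrow> rot x
    \<and> (\<lambda>j. sc (c j) (Fmap (rot (X j)))) \<longlonglongrightarrow> rot y"
    unfolding Fmap_rot sc_rot rot_eq_0_iff by (auto intro: tendsto_rot)
  then show ?thesis unfolding Fmap_limit_def by (intro exI[of _ "\<lambda>j. rot (X j)"] exI[of _ c])
qed

lemma null_sequence_avoiding_inverses:
  fixes R :: real
  shows "\<exists>t :: nat \<Rightarrow> complex. t \<longlonglongrightarrow> 0 \<and> (\<forall>j. t j \<noteq> 0 \<and> (\<forall>w. norm w \<le> R \<longrightarrow> t j * w \<noteq> 1))"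
proof (intro exI conjI allI impI)
  define N where "N = nat \<lceil>R\<rceil> + 1"
  show "(\<lambda>j. inverse (of_nat (j + N)) :: complex) \<longlonglongrightarrow> 0"
    using LIMSEQ_ignore_initial_segment[OF lim_inverse_n] .
  fix j :: nat and w :: complex
  have "(of_nat (j + N) :: complex) \<noteq> 0" unfolding of_nat_eq_0_iff N_def by simp
  then show "inverse (of_nat (j + N)) \<noteq> (0 :: complex)" by simp
  assume "norm w \<le> R"
  then have "norm w < real (j + N)" unfolding N_def by linarith
  then have "norm w / real (j + N) < 1"
    by (metis divide_less_eq_1_pos norm_ge_zero order.strict_trans1)
  then have "norm (inverse (of_nat (j + N)) * w) < 1"
    by (simp only: norm_mult norm_inverse norm_of_nat divide_inverse mult.commute)
  then show "inverse (of_nat (j + N)) * w \<noteq> 1" by auto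
qed

lemma conic_square_roots:
  assumes "rho (y1, y2, y3) = 0"
  shows "\<exists>al be ga. y1 = al^2 \<and> y2 = be^2 \<and> y3 = ga^2 \<and> al = be + ga"
proof -
  define b c where "b = csqrt y2" and "c = csqrt y3"
  have sq: "y2 = b^2" "y3 = c^2" by (simp_all add: b_def c_def)
  have "(y1 - (b + c)^2) * (y1 - (b + -c)^2) = rho (y1, y2, y3)"
    unfolding sq by (simp add: algebra_simps power2_eq_square)
  then consider "y1 = (b + c)^2" | "y1 = (b + -c)^2" using assms by fastforce
  then show ?thesis
  proof cases
    case 1
    show ?thesis by (rule exI[of _ "b + c"], rule exI[of _ b], rule exI[of _ c]) (simp add: 1 sq)
  next
    case 2
    show ?thesis by (rule exI[of _ "b + -c"], rule exI[of _ b], rule exI[of _ "-c"]) (simp add: 2 sq)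
  qed
qed

lemma Fmap_limit_a1:
  assumes "rho y = 0" "y \<noteq> 0"
  shows "Fmap_limit a1 y"
proof -
  obtain y1 y2 y3 where y: "y = (y1, y2, y3)" by (cases y)
  obtain al be ga where sq: "y1 = al^2" "y2 = be^2" "y3 = ga^2" and al: "al = be + ga"
    using conic_square_roots assms(1) unfolding y by blast
  obtain t :: "nat \<Rightarrow> complex" where t: "t \<longlonglongrightarrow> 0" "\<And>j. t j \<noteq> 0"
    "\<And>j w. norm w \<le> norm al + norm be + norm ga \<Longrightarrow> t j * w \<noteq> 1"
    using null_sequence_avoiding_inverses[of "norm al + norm be + norm ga"] by blast
  define X where "X j = (t j * al, 1 - t j * be, 1 - t j * ga)" for j
  define Y where "Y j = (al^2 * (1 - t j * al)^2, be^2 * (1 - t j * be)^2, ga^2 * (1 - t j * ga)^2)" for j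
  \<comment> \<open>\<open>x1\<close> and, as \<open>al = be + ga\<close>, also \<open>x1 - x2 + x3\<close> and \<open>x1 + x2 - x3\<close> vanish to first
    order along \<open>X\<close>, so every coordinate of \<open>Fmap (X j)\<close> carries the factor \<open>4 t\<^sup>2\<close>.\<close>
  have Fmap_X: "Fmap (X j) = sc (4 * t j ^ 2) (Y j)" for j
    unfolding X_def Y_def using al by (simp add: algebra_simps power2_eq_square)
  define c where "c j = inverse (4 * t j ^ 2)" for j
  have FX: "sc (c j) (Fmap (X j)) = Y j" for j
    unfolding Fmap_X sc_sc c_def using t(2) by simp
  have "1 - t j * w \<noteq> 0" if "w \<in> {al, be, ga}" for j w
    using t(3)[of w j] that norm_ge_zero[of al] norm_ge_zero[of be] norm_ge_zero[of ga] by auto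
  then have "Y j \<noteq> 0" for j using assms(2) unfolding y sq Y_def by auto
  moreover have "X \<longlonglongrightarrow> (0 * al, 1 - 0 * be, 1 - 0 * ga)"
    unfolding X_def by (intro tendsto_intros t(1))
  moreover have "Y \<longlonglongrightarrow> (al^2 * (1 - 0 * al)^2, be^2 * (1 - 0 * be)^2, ga^2 * (1 - 0 * ga)^2)"
    unfolding Y_def by (intro tendsto_intros t(1))
  ultimately show ?thesis
    unfolding Fmap_limit_def y sq a1_def by (intro exI[of _ X] exI[of _ c]) (simp add: FX)
qed

lemma Qc_subset_flim:
  assumes "a \<in> {pt a1, pt a2, pt a3}"
  shows "Qc \<subseteq> flim a"
proof
  fix q assume q: "q \<in> Qc"
  then have "q \<in> P2" by (simp add: Qc_def)
  then obtain y where y: "y \<noteq> 0" "q = pt y" by (rule P2_E)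
  with q have "rho y = 0" using pt_in_Qc_iff by blast
  have a: "a2 = rot a1" "a3 = rot (rot a1)" by (simp_all add: a1_def a2_def a3_def)
  have "Fmap_limit a1 y" "Fmap_limit a1 (rot (rot y))" "Fmap_limit a1 (rot y)"
    using Fmap_limit_a1 y(1) \<open>rho y = 0\<close> by (simp_all add: rho_rot rot_eq_0_iff del: rot_simp)
  then have "Fmap_limit a1 y" "Fmap_limit a2 y" "Fmap_limit a3 y"
    unfolding a using Fmap_limit_rot rot_rot_rot by metis+
  moreover have "a1 \<noteq> 0" "a2 \<noteq> 0" "a3 \<noteq> 0" by (simp_all add: a1_def a2_def a3_def)
  ultimately show "q \<in> flim a"
    using assms flim_if_Fmap_limit[OF _ y(1)] unfolding y(2) by blast
qed

lemma flim_eq_Qc: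
  assumes "a \<in> {pt a1, pt a2, pt a3}"
  shows "flim a = Qc"
proof
  have "flim (pt a1) \<subseteq> Qc" "flim (pt a2) \<subseteq> Qc" "flim (pt a3) \<subseteq> Qc"
    unfolding a1_def a2_def a3_def by (rule flim_subset_Qc; simp)+
  then show "flim a \<subseteq> Qc" using assms by blast
  show "Qc \<subseteq> flim a" using assms by (rule Qc_subset_flim)
qed

subsection \<open>Real points and the disk \<open>U\<close>\<close>

lemma lines_cubic_nonzero:
  assumes "x \<noteq> 0" "pt x \<notin> A1" "pt x \<notin> A2" "pt x \<notin> A3"
  shows "lines_cubic x \<noteq> 0"
proof
  obtain x1 x2 x3 where x: "x = (x1, x2, x3)" by (cases x)
  have on_line: "pt x \<in> pline a b" if "x = sc s a + sc t b" for a b s t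
    using that pt_self[OF assms(1)] pt_in_P2[OF assms(1)] unfolding pline_def by blast
  assume "lines_cubic x = 0"
  then have "x1 = x2 + x3 \<or> x2 = x1 + x3 \<or> x3 = x1 + x2"
    unfolding x lines_cubic_simp mult_eq_0_iff by (auto simp: algebra_simps)
  then consider "x1 = x2 + x3" | "x2 = x1 + x3" | "x3 = x1 + x2" by blast
  then show False
  proof cases
    case 1
    then have "x = sc x3 a2 + sc x2 a3" by (simp add: x a2_def a3_def)
    then show False using on_line assms(2) unfolding A1_def by blast
  next
    case 2
    then have "x = sc x3 a1 + sc x1 a3" by (simp add: x a1_def a3_def)
    then show False using on_line assms(3) unfolding A2_def by blast
  next
    case 3
    then have "x = sc x2 a1 + sc x1 a2" by (simp add: x a1_def a2_def)
    then show False using on_line assms(4) unfolding A3_def by blast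
  qed
qed

lemma is_real_hmap: "is_real x \<Longrightarrow> is_real (hmap x)"
  by (cases x) simp

lemma is_real_Fmap: "is_real x \<Longrightarrow> is_real (Fmap x)"
  by (cases x) simp

lemma Reals_rho: "is_real x \<Longrightarrow> rho x \<in> \<real>"
  by (cases x) simp

lemma Reals_lines_cubic: "is_real x \<Longrightarrow> lines_cubic x \<in> \<real>"
  by (cases x) simp

lemma Re_mult_square_neg_iff:
  assumes "z \<in> \<real>" "a \<in> \<real>" "a \<noteq> 0"
  shows "Re (z * a^2) < 0 \<longleftrightarrow> Re z < 0"
proof -
  obtain r s where "z = of_real r" "a = of_real s" using assms(1,2) by (auto elim!: Reals_cases)
  moreover have "0 < s^2" using assms(3) calculation by simp
  ultimately show ?thesis by (simp add: mult_less_0_iff del: of_real_power add: of_real_power [symmetric])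
qed

lemma Reals_scale:
  assumes "is_real x" "is_real (sc c x)" "x \<noteq> 0"
  shows "c \<in> \<real>"
proof -
  obtain x1 x2 x3 where x: "x = (x1, x2, x3)" by (cases x)
  have "c \<in> \<real>" if "xi \<in> \<real>" "c * xi \<in> \<real>" "xi \<noteq> 0" for xi
    using Reals_divide[OF that(2,1)] that(3) by simp
  then show ?thesis using assms unfolding x by auto
qed

lemma pt_in_U_iff:
  assumes "x \<noteq> 0" "is_real x"
  shows "pt x \<in> U \<longleftrightarrow> Re (rho x) < 0"
proof
  assume "pt x \<in> U"
  then obtain y where y: "y \<in> pt x" "is_real y" "Re (rho y) < 0" by (auto simp: U_def)
  then obtain c where c: "c \<noteq> 0" "y = sc c x" by (auto simp: mem_pt_iff)
  then have "c \<in> \<real>" using Reals_scale assms y(2) by blast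
  moreover have "rho y = rho x * c^2" unfolding c(2) rho_sc by (rule mult.commute)
  ultimately show "Re (rho x) < 0"
    using Re_mult_square_neg_iff[OF Reals_rho[OF assms(2)]] c(1) y(3) by metis
next
  assume "Re (rho x) < 0"
  then show "pt x \<in> U" unfolding U_def using assms pt_self pt_in_P2 by blast
qed

lemma Reals_if_square_pos:
  fixes u :: complex
  assumes "u^2 = of_real r" "0 < r"
  shows "u \<in> \<real>"
proof -
  have "Im u * Re u = 0" "Im u * Im u < Re u * Re u"
    using arg_cong[OF assms(1), of Im] arg_cong[OF assms(1), of Re] assms(2)
    by (simp_all add: power2_eq_square)
  then show ?thesis by (auto simp: complex_is_Real_iff)
qed

lemma negative_rho_same_sign:
  fixes r1 r2 r3 :: real
  assumes "r1^2 + r2^2 + r3^2 - 2 * (r1 * r2 + r2 * r3 + r3 * r1) < 0"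
  shows "\<exists>\<sigma>. \<sigma>^2 = 1 \<and> 0 < \<sigma> * r1 \<and> 0 < \<sigma> * r2 \<and> 0 < \<sigma> * r3"
proof -
  have "0 < r1 * r2" "0 < r2 * r3" "0 < r1 * r3"
    using assms zero_le_power2[of "r3 - r1 - r2"] zero_le_power2[of "r1 - r2 - r3"]
      zero_le_power2[of "r2 - r1 - r3"]
    by (simp_all add: power2_eq_square algebra_simps)
  then show ?thesis
    by (cases "0 < r1") (auto intro: exI[of _ 1] exI[of _ "-1"] simp: zero_less_mult_iff)
qed

lemma real_point_if_fpt_in_U:
  assumes "x \<noteq> 0" "lines_cubic x \<noteq> 0" "fpt (pt x) \<in> U"
  shows "\<exists>z. z \<noteq> 0 \<and> is_real z \<and> pt z = pt x"
proof -
  have "pt (Fmap x) \<in> U" using assms(1,3) by (simp add: fpt_pt)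
  then obtain y where y: "y \<in> pt (Fmap x)" "is_real y" "Re (rho y) < 0" unfolding U_def by blast
  then obtain c where c: "c \<noteq> 0" "y = sc c (Fmap x)" unfolding mem_pt_iff by blast
  obtain h1 h2 h3 where h: "hmap x = (h1, h2, h3)" by (cases "hmap x")
  have y_h: "y = (c * h1^2, c * h2^2, c * h3^2)" by (simp add: c(2) Fmap_def gmap_def h)
  then have "c * h1^2 \<in> \<real>" "c * h2^2 \<in> \<real>" "c * h3^2 \<in> \<real>" using y(2) by simp_all
  then obtain r1 r2 r3 where r: "c * h1^2 = of_real r1" "c * h2^2 = of_real r2" "c * h3^2 = of_real r3"
    by (metis Reals_cases)
  have "rho y = of_real (r1^2 + r2^2 + r3^2 - 2 * (r1 * r2 + r2 * r3 + r3 * r1))"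
    unfolding y_h r by simp
  then have "r1^2 + r2^2 + r3^2 - 2 * (r1 * r2 + r2 * r3 + r3 * r1) < 0"
    using y(3) by (simp del: rho_simp)
  then obtain \<sigma> where \<sigma>: "\<sigma>^2 = 1" "0 < \<sigma> * r1" "0 < \<sigma> * r2" "0 < \<sigma> * r3"
    using negative_rho_same_sign by blast
  \<comment> \<open>The coordinates of \<open>y\<close> share a sign, so a multiple \<open>u\<close> of \<open>hmap x\<close> is real, and then
    \<open>hmap u\<close> is a real multiple of \<open>hmap (hmap x)\<close>, i.e. of \<open>x\<close>.\<close>
  define s where "s = csqrt (of_real \<sigma> * c)"
  have s2: "s^2 = of_real \<sigma> * c" by (simp add: s_def)
  have "\<sigma> \<noteq> 0" using \<sigma>(1) by auto
  then have "s \<noteq> 0" using s2 c(1) by auto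
  have Reals_sh: "s * h \<in> \<real>" if "c * h^2 = of_real r" "0 < \<sigma> * r" for h r
  proof (rule Reals_if_square_pos)
    show "(s * h)^2 = of_real (\<sigma> * r)"
      unfolding power_mult_distrib s2 using that(1) by (simp add: mult.assoc)
  qed (rule that(2))
  have "is_real (sc s (hmap x))" using Reals_sh r \<sigma> by (simp add: h)
  then have "is_real (hmap (sc s (hmap x)))" by (rule is_real_hmap)
  moreover have "hmap (sc s (hmap x)) = sc (s^2 * lines_cubic x) x"
    unfolding hmap_sc hmap_hmap sc_sc ..
  moreover have "s^2 * lines_cubic x \<noteq> 0" using \<open>s \<noteq> 0\<close> assms(2) by simp
  ultimately show ?thesis
    using assms(1) pt_sc sc_eq_0_iff by metis
qed

lemma pt_in_U_iff_fpt_in_U: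
  assumes "x \<noteq> 0" "lines_cubic x \<noteq> 0"
  shows "pt x \<in> U \<longleftrightarrow> fpt (pt x) \<in> U"
proof -
  have real_case: "pt z \<in> U \<longleftrightarrow> fpt (pt z) \<in> U"
    if z: "z \<noteq> 0" "is_real z" "pt z = pt x" for z
  proof -
    have "z \<in> pt x" using z(3) pt_self[OF z(1)] by simp
    then obtain k where k: "k \<noteq> 0" "z = sc k x" unfolding mem_pt_iff by blast
    then have L: "lines_cubic z \<noteq> 0" using assms(2) by (simp add: lines_cubic_sc del: lines_cubic_simp)
    then have "Fmap z \<noteq> 0" using Fmap_nonzero z(1) by blast
    have "pt z \<in> U \<longleftrightarrow> Re (rho z) < 0" by (rule pt_in_U_iff[OF z(1,2)])
    also have "\<dots> \<longleftrightarrow> Re (rho (Fmap z)) < 0"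
      unfolding rho_Fmap by (rule Re_mult_square_neg_iff[OF Reals_rho[OF z(2)] Reals_lines_cubic[OF z(2)] L, symmetric])
    also have "\<dots> \<longleftrightarrow> pt (Fmap z) \<in> U"
      by (rule pt_in_U_iff[OF \<open>Fmap z \<noteq> 0\<close> is_real_Fmap[OF z(2)], symmetric])
    finally show ?thesis using z(1) by (simp add: fpt_pt)
  qed
  have real_point: "\<exists>z. z \<noteq> 0 \<and> is_real z \<and> pt z = pt x" if "pt x \<in> U \<or> fpt (pt x) \<in> U"
  proof (cases "pt x \<in> U")
    case True
    then obtain z where z: "z \<in> pt x" "is_real z" unfolding U_def by blast
    then have "z \<noteq> 0" unfolding mem_pt_iff by blast
    with z show ?thesis using pt_eqI[OF z(1)] by blast
  next
    case False
    then show ?thesis using that real_point_if_fpt_in_U[OF assms] by blast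
  qed
  show ?thesis
  proof (cases "pt x \<in> U \<or> fpt (pt x) \<in> U")
    case True
    with real_point obtain z where z: "z \<noteq> 0" "is_real z" "pt z = pt x" by blast
    from real_case[OF z] z(3) show ?thesis by simp
  qed blast
qed

theorem mainTheorem15:
  shows "(\<forall>a \<in> Ind. flim a = Qc)
       \<and> (\<forall>p \<in> Qc - Ind. fpt p = p)
       \<and> (\<forall>p \<in> P2 - (A1 \<union> A2 \<union> A3). p \<in> U \<longleftrightarrow> fpt p \<in> U)"
proof (intro conjI ballI)
  fix a assume "a \<in> Ind"
  then show "flim a = Qc" using Ind_subset flim_eq_Qc by blast
next
  fix p assume p: "p \<in> Qc - Ind"
  then have "p \<in> P2" by (simp add: Qc_def)
  then obtain x where x: "x \<noteq> 0" "p = pt x" by (rule P2_E)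
  with p have "rho x = 0" "Fmap x \<noteq> 0" using pt_in_Qc_iff pt_in_Ind_iff by blast+
  with x show "fpt p = p" using fpt_fixes_conic by blast
next
  fix p assume p: "p \<in> P2 - (A1 \<union> A2 \<union> A3)"
  then obtain x where x: "x \<noteq> 0" "p = pt x" by (blast elim: P2_E)
  with p have "lines_cubic x \<noteq> 0" using lines_cubic_nonzero by blast
  with x show "p \<in> U \<longleftrightarrow> fpt p \<in> U" using pt_in_U_iff_fpt_in_U by blast
qed

end
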